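(* Let $p\in(0,1)$ be fixed, $q=1-p$. As $n\to\infty$, for every real $r>0$, $$f_r(n)=\frac{1}{(np)^r}\left(1+\frac{r(r+1)q}{2(np)}+\frac{r(r+1)(r+2)q(4+q+3rq)}{24(np)^2}+O\!\left(n^{-3}\right)\right).$$ In particular, $$f_1(n)=\frac{1}{np}\left(1+\frac{q}{np}+\frac{q(1+q)}{(np)^2}+\frac{q(1+4q+q^2)}{(np)^3}+\frac{q(1+q)(1+10q+q^2)}{(np)^4}+\frac{q(1+26q+66q^2+26q^3+q^4)}{(np)^5}+O(n^{-6})\right),$$ $$f_2(n)=\frac{1}{(np)^2}\left(1+\frac{3q}{np}+\frac{q(4+7q)}{(np)^2}+\frac{5q(1+6q+3q^2)}{(np)^3}+\frac{q(6+91q+146q^2+31q^3)}{(np)^4}+O(n^{-5})\right),$$ $$f_3(n)=\frac{1}{(np)^3}\left(1+\frac{6q}{np}+\frac{5q(2+5q)}{(np)^2}+\frac{15q(1+8q+6q^2)}{(np)^3}+\frac{7q(3+58q+128q^2+43q^3)}{(np)^4}+O(n^{-5})\right).$$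
   Context: For a positive integer $n$ and real $r>0$, $f_r(n)=\sum_{i=1}^n\binom{n}{i}p^iq^{n-i}\,i^{-r}$ (the $r$-th inverse moment of the positive binomial distribution times $1-q^n$). *)

theory Defs
  imports "HOL-Analysis.Analysis" "HOL-Library.Landau_Symbols"
begin

text \<open>The r-th inverse moment of the positive binomial distribution Bin(n,p),
  multiplied by 1 - q^n:  f_r(n) = sum_{i=1}^n (n choose i) p^i q^(n-i) i^(-r).\<close>
definition inv_moment :: "real \<Rightarrow> real \<Rightarrow> nat \<Rightarrow> real" where
  "inv_moment p r n =
     (\<Sum>i=1..n. real (n choose i) * p ^ i * (1 - p) ^ (n - i) * real i powr (- r))"

end

theory Submission
  imports Defs "HOL-Real_Asymp.Real_Asymp"
begin

(* Let X ~ Bin(n, p) and m = n p.  Since 0 powr -r = 0 in Isabelle, f_r(n) is simply the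
   expectation of X powr -r.  Where X >= m/2, write X powr -r = m powr -r * (1 + u) powr -r with
   u = (X - m)/m >= -1/2 and expand to order 2K by Taylor's formula; the Lagrange remainder is
   O(u^(2K)) uniformly there.  The event X < m/2 has exponentially small probability (Chernoff).
   Taking expectations, m^r f_r(n) = sum_{k<2K} (-r gchoose k) mu_k / m^k + O(mu_2K / m^2K),
   where mu_k are the central moments.  Adding one Bernoulli trial gives a recurrence for mu_k,
   which shows mu_k = O(n^(k div 2)); hence every term with k >= 2K - 1 is O(n^-K).  The
   remaining mu_k are explicit polynomials in m and q, and the stated coefficients follow from
   a polynomial identity in 1/m. *)

definition binomial_expectation :: "real \<Rightarrow> nat \<Rightarrow> (nat \<Rightarrow> real) \<Rightarrow> real" where
  "binomial_expectation p n h = (\<Sum>i\<le>n. real (n choose i) * p ^ i * (1 - p) ^ (n - i) * h i)"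

lemma binomial_expectation_Suc:
  "binomial_expectation p (Suc n) h =
     (1 - p) * binomial_expectation p n h + p * binomial_expectation p n (\<lambda>i. h (Suc i))"
proof -
  let ?q = "1 - p"
  let ?shifted = "\<lambda>c. (\<Sum>i\<le>n. real (c i) * p ^ Suc i * ?q ^ (n - i) * h (Suc i))"
  have "?q * binomial_expectation p n h
      = (\<Sum>j\<le>Suc n. real (n choose j) * p ^ j * ?q ^ (Suc n - j) * h j)"
    unfolding binomial_expectation_def sum_distrib_left by (simp add: Suc_diff_le mult_ac)
  also have "\<dots> = ?q ^ Suc n * h 0 + ?shifted (\<lambda>i. n choose Suc i)"
    by (subst sum.atMost_Suc_shift) simp
  finally have low: "?q * binomial_expectation p n h = ?q ^ Suc n * h 0 + ?shifted (\<lambda>i. n choose Suc i)" .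
  have high: "p * binomial_expectation p n (\<lambda>i. h (Suc i)) = ?shifted (\<lambda>i. n choose i)"
    unfolding binomial_expectation_def sum_distrib_left by (simp add: mult_ac)
  have "binomial_expectation p (Suc n) h = ?q ^ Suc n * h 0 + ?shifted (\<lambda>i. Suc n choose Suc i)"
    unfolding binomial_expectation_def by (subst sum.atMost_Suc_shift) simp
  also have "\<dots> = ?q ^ Suc n * h 0 + ?shifted (\<lambda>i. n choose Suc i) + ?shifted (\<lambda>i. n choose i)"
    by (simp add: sum.distrib[symmetric] algebra_simps)
  finally show ?thesis using low high by simp
qed

lemma binomial_expectation_add:
  "binomial_expectation p n (\<lambda>i. f i + g i) = binomial_expectation p n f + binomial_expectation p n g"
  unfolding binomial_expectation_def by (simp add: sum.distrib algebra_simps)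

lemma binomial_expectation_diff:
  "binomial_expectation p n (\<lambda>i. f i - g i) = binomial_expectation p n f - binomial_expectation p n g"
  unfolding binomial_expectation_def by (simp add: sum_subtractf algebra_simps)

lemma binomial_expectation_cmult:
  "binomial_expectation p n (\<lambda>i. c * f i) = c * binomial_expectation p n f"
  unfolding binomial_expectation_def by (simp add: sum_distrib_left mult_ac)

lemma binomial_expectation_sum:
  "binomial_expectation p n (\<lambda>i. \<Sum>j\<in>J. f j i) = (\<Sum>j\<in>J. binomial_expectation p n (f j))"
  unfolding binomial_expectation_def by (simp add: sum_distrib_left sum.swap[of _ J])

lemma binomial_expectation_mono:
  assumes "0 \<le> p" "p \<le> 1" "\<And>i. i \<le> n \<Longrightarrow> f i \<le> g i"
  shows "binomial_expectation p n f \<le> binomial_expectation p n g"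
  unfolding binomial_expectation_def
  by (rule sum_mono, rule mult_left_mono) (use assms in auto)

lemma abs_binomial_expectation_le:
  assumes "0 \<le> p" "p \<le> 1"
  shows "\<bar>binomial_expectation p n f\<bar> \<le> binomial_expectation p n (\<lambda>i. \<bar>f i\<bar>)"
  unfolding binomial_expectation_def
  by (rule order_trans[OF sum_abs]) (use assms in \<open>simp add: abs_mult\<close>)

lemma binomial_expectation_power:
  "binomial_expectation p n (\<lambda>i. a ^ i) = (1 - p + p * a) ^ n"
  unfolding binomial_expectation_def using binomial_ring[of "p * a" "1 - p" n]
  by (simp add: power_mult_distrib mult_ac add.commute)

lemma inv_moment_eq_binomial_expectation:
  "inv_moment p r n = binomial_expectation p n (\<lambda>i. real i powr - r)"
proof -
  have "{..n} = insert 0 {1..n}" by auto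
  then show ?thesis unfolding inv_moment_def binomial_expectation_def by simp
qed

definition central_moment :: "real \<Rightarrow> nat \<Rightarrow> nat \<Rightarrow> real" where
  "central_moment p k n = binomial_expectation p n (\<lambda>i. (real i - real n * p) ^ k)"

definition bernoulli_central_moment :: "real \<Rightarrow> nat \<Rightarrow> real" where
  "bernoulli_central_moment p k = (1 - p) * (- p) ^ k + p * (1 - p) ^ k"

lemma central_moment_0_right: "central_moment p k 0 = (if k = 0 then 1 else 0)"
  unfolding central_moment_def binomial_expectation_def by simp

lemma central_moment_Suc:
  "central_moment p k (Suc n) =
     (\<Sum>j\<le>k. real (k choose j) * central_moment p j n * bernoulli_central_moment p (k - j))"
proof -
  let ?d = "\<lambda>i. real i - real n * p"
  have trial_fails: "(?d i - p) ^ k = (\<Sum>j\<le>k. real (k choose j) * (- p) ^ (k - j) * ?d i ^ j)" for i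
    using binomial_ring[of "?d i" "- p" k] by (simp add: mult_ac)
  have trial_succeeds: "(?d i + (1 - p)) ^ k = (\<Sum>j\<le>k. real (k choose j) * (1 - p) ^ (k - j) * ?d i ^ j)" for i
    using binomial_ring[of "?d i" "1 - p" k] by (simp add: mult_ac)
  have "central_moment p k (Suc n) =
      (1 - p) * binomial_expectation p n (\<lambda>i. (?d i - p) ^ k)
      + p * binomial_expectation p n (\<lambda>i. (?d i + (1 - p)) ^ k)"
    unfolding central_moment_def binomial_expectation_Suc[of p n] by (simp add: algebra_simps)
  also have "\<dots> = (\<Sum>j\<le>k. real (k choose j) * central_moment p j n * bernoulli_central_moment p (k - j))"
    unfolding trial_fails trial_succeeds binomial_expectation_sum binomial_expectation_cmult central_moment_def
      bernoulli_central_moment_def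
    by (simp add: sum_distrib_left sum.distrib[symmetric] algebra_simps)
  finally show ?thesis .
qed

(* The k-th central moment for k <= 10 as a polynomial in the mean m = n p and q = 1 - p,
   obtained by iterating central_moment_Suc; for k > 10 the list index is unspecified. *)
definition central_moment_poly :: "nat \<Rightarrow> real \<Rightarrow> real \<Rightarrow> real" where
  "central_moment_poly k m q =
    [1,
     0,
     q * m,
     (- q + 2 * q^2) * m,
     3 * q^2 * m^2
       + (q - 6 * q^2 + 6 * q^3) * m,
     (- 10 * q^2 + 20 * q^3) * m^2
       + (- q + 14 * q^2 - 36 * q^3 + 24 * q^4) * m,
     15 * q^3 * m^3
       + (25 * q^2 - 130 * q^3 + 130 * q^4) * m^2
       + (q - 30 * q^2 + 150 * q^3 - 240 * q^4 + 120 * q^5) * m,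
     (- 105 * q^3 + 210 * q^4) * m^3
       + (- 56 * q^2 + 574 * q^3 - 1386 * q^4 + 924 * q^5) * m^2
       + (- q + 62 * q^2 - 540 * q^3 + 1560 * q^4 - 1800 * q^5 + 720 * q^6) * m,
     105 * q^4 * m^4
       + (490 * q^3 - 2380 * q^4 + 2380 * q^5) * m^3
       + (119 * q^2 - 2156 * q^3 + 9464 * q^4 - 14616 * q^5 + 7308 * q^6) * m^2
       + (q - 126 * q^2 + 1806 * q^3 - 8400 * q^4 + 16800 * q^5 - 15120 * q^6 + 5040 * q^7) * m,
     (- 1260 * q^4 + 2520 * q^5) * m^4
       + (- 1918 * q^3 + 17052 * q^4 - 39648 * q^5 + 26432 * q^6) * m^3
       + (- 246 * q^2 + 7440 * q^3 - 52956 * q^4 + 142344 * q^5 - 160560 * q^6 + 64224 * q^7) * m^2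
       + (- q + 254 * q^2 - 5796 * q^3 + 40824 * q^4 - 126000 * q^5 + 191520 * q^6 - 141120 * q^7 + 40320 * q^8) * m,
     945 * q^5 * m^5
       + (9450 * q^4 - 44100 * q^5 + 44100 * q^6) * m^4
       + (6825 * q^3 - 99120 * q^4 + 402780 * q^5 - 607320 * q^6 + 303660 * q^7) * m^3
       + (501 * q^2 - 24438 * q^3 + 265278 * q^4 - 1105056 * q^5 + 2110968 * q^6 - 1870128 * q^7 + 623376 * q^8) * m^2
       + (q - 510 * q^2 + 18150 * q^3 - 186480 * q^4 + 834120 * q^5 - 1905120 * q^6 + 2328480 * q^7 - 1451520 * q^8 + 362880 * q^9) * m] ! k"

lemma central_moment_poly_Suc:
  assumes "k \<le> 10"
  shows "(\<Sum>j\<le>k. real (k choose j) * central_moment_poly j m (1 - p) * bernoulli_central_moment p (k - j))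
         = central_moment_poly k (m + p) (1 - p)"
proof -
  have "k \<in> {0, 1, 2, 3, 4, 5, 6, 7, 8, 9, 10}" using assms by (simp add: eval_nat_numeral le_Suc_eq)
  (* each case is a polynomial identity; the premise k = c is dropped so that algebra accepts it *)
  then show ?thesis
    by (elim insertE emptyE)
      (simp_all add: eval_nat_numeral binomial_Suc_Suc central_moment_poly_def
        bernoulli_central_moment_def, (erule thin_rl, algebra)+)
qed

lemma central_moment_eq_poly:
  assumes "k \<le> 10"
  shows "central_moment p k n = central_moment_poly k (real n * p) (1 - p)"
  using assms
proof (induction n arbitrary: k)
  case 0
  then have "k \<in> {0, 1, 2, 3, 4, 5, 6, 7, 8, 9, 10}" by (simp add: eval_nat_numeral le_Suc_eq)
  then show ?case
    by (elim insertE emptyE; simp add: central_moment_0_right central_moment_poly_def)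
next
  case (Suc n)
  have "central_moment p k (Suc n) =
      (\<Sum>j\<le>k. real (k choose j) * central_moment_poly j (real n * p) (1 - p)
        * bernoulli_central_moment p (k - j))"
    unfolding central_moment_Suc using Suc by (intro sum.cong) auto
  also have "\<dots> = central_moment_poly k (real n * p + p) (1 - p)"
    by (rule central_moment_poly_Suc[OF Suc.prems])
  finally show ?case by (simp add: algebra_simps)
qed

lemma abs_bernoulli_central_moment_le:
  assumes "0 \<le> p" "p \<le> 1"
  shows "\<bar>bernoulli_central_moment p k\<bar> \<le> 1"
proof -
  have "\<bar>bernoulli_central_moment p k\<bar> \<le> (1 - p) * p ^ k + p * (1 - p) ^ k"
    unfolding bernoulli_central_moment_def using assms
    by (intro order_trans[OF abs_triangle_ineq]) (simp add: abs_mult power_abs)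
  also have "\<dots> \<le> (1 - p) + p"
    using assms by (intro add_mono mult_left_le power_le_one) auto
  finally show ?thesis by simp
qed

lemma central_moment_increment:
  assumes "2 \<le> k"
  shows "central_moment p k (Suc n) - central_moment p k n =
    (\<Sum>j\<le>k - 2. real (k choose j) * central_moment p j n * bernoulli_central_moment p (k - j))"
proof -
  obtain l where k: "k = Suc (Suc l)" using assms by (metis add_2_eq_Suc le_Suc_ex)
  have "bernoulli_central_moment p 0 = 1" "bernoulli_central_moment p 1 = 0"
    unfolding bernoulli_central_moment_def by (simp_all add: algebra_simps)
  then show ?thesis unfolding central_moment_Suc k by simp
qed

lemma abs_le_of_increments_le:
  fixes a :: "nat \<Rightarrow> real"
  assumes "a 0 = 0" "0 \<le> B" "\<And>n. \<bar>a (Suc n) - a n\<bar> \<le> B * real (Suc n) ^ e"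
  shows "\<bar>a n\<bar> \<le> B * real n ^ Suc e"
proof (induction n)
  case 0
  show ?case using assms(1) by simp
next
  case (Suc n)
  have "real n ^ Suc e + real (Suc n) ^ e \<le> real (Suc n) ^ Suc e"
    using power_mono[of "real n" "real (Suc n)" e] by (simp add: algebra_simps mult_left_mono)
  then have "B * real n ^ Suc e + B * real (Suc n) ^ e \<le> B * real (Suc n) ^ Suc e"
    using assms(2) by (metis distrib_left mult_left_mono)
  then show ?case using Suc.IH assms(3)[of n] by linarith
qed

lemma central_moment_bound:
  assumes "0 \<le> p" "p \<le> 1"
  shows "\<exists>C \<ge> 0. \<forall>n. \<bar>central_moment p k n\<bar> \<le> C * real n ^ (k div 2)"
proof (induction k rule: less_induct)
  case (less k)
  show ?case
  proof (cases "k < 2")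
    case True
    then have "k = 0 \<or> k = 1" by auto
    then have "\<bar>central_moment p k n\<bar> \<le> 1 * real n ^ (k div 2)" for n
      by (auto simp: central_moment_eq_poly central_moment_poly_def)
    then show ?thesis by (intro exI[of _ 1]) auto
  next
    case False
    define e where "e = k div 2 - 1"
    have k_div: "k div 2 = Suc e" using False unfolding e_def by simp
    obtain C where C: "\<And>j. j < k \<Longrightarrow> C j \<ge> 0 \<and> (\<forall>n. \<bar>central_moment p j n\<bar> \<le> C j * real n ^ (j div 2))"
      using less.IH by metis
    define B where "B = (\<Sum>j\<le>k - 2. real (k choose j) * C j)"
    have B: "B \<ge> 0" unfolding B_def using C False by (intro sum_nonneg) auto
    have increment: "\<bar>central_moment p k (Suc n) - central_moment p k n\<bar> \<le> B * real (Suc n) ^ e" for n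
    proof -
      have "\<bar>real (k choose j) * central_moment p j n * bernoulli_central_moment p (k - j)\<bar>
          \<le> real (k choose j) * C j * real (Suc n) ^ e" if "j \<le> k - 2" for j
      proof -
        have "\<bar>central_moment p j n\<bar> \<le> C j * real n ^ (j div 2)" using C that False by auto
        also have "\<dots> \<le> C j * real (Suc n) ^ e"
        proof (rule mult_left_mono)
          have "real n ^ (j div 2) \<le> real (Suc n) ^ (j div 2)" by (intro power_mono) auto
          also have "\<dots> \<le> real (Suc n) ^ e"
            using that False k_div by (intro power_increasing) auto
          finally show "real n ^ (j div 2) \<le> real (Suc n) ^ e" .
        qed (use C that False in auto)
        finally have "\<bar>central_moment p j n\<bar> * \<bar>bernoulli_central_moment p (k - j)\<bar>
            \<le> C j * real (Suc n) ^ e"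
          using abs_bernoulli_central_moment_le[OF assms, of "k - j"]
          by (meson abs_ge_zero mult_left_le order_trans)
        then show ?thesis by (simp add: abs_mult mult.assoc mult_left_mono)
      qed
      then show ?thesis
        unfolding central_moment_increment[OF leI[OF False]] B_def sum_distrib_right
        by (intro order_trans[OF sum_abs] sum_mono) auto
    qed
    have "\<bar>central_moment p k n\<bar> \<le> B * real n ^ Suc e" for n
      using False by (intro abs_le_of_increments_le[OF _ B increment]) (simp add: central_moment_0_right)
    then show ?thesis using B k_div by auto
  qed
qed

lemma central_moment_ratio_bigo:
  assumes "0 < p" "p \<le> 1" "K \<le> k - k div 2"
  shows "(\<lambda>n. central_moment p k n / (real n * p) ^ k) \<in> O(\<lambda>n. real n powr - real K)"
proof -
  obtain C where C: "C \<ge> 0" "\<And>n. \<bar>central_moment p k n\<bar> \<le> C * real n ^ (k div 2)"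
    using central_moment_bound[of p k] assms by auto
  show ?thesis
  proof (rule bigoI[where c = "C / p ^ k"])
    show "\<forall>\<^sub>F n in sequentially. norm (central_moment p k n / (real n * p) ^ k)
        \<le> C / p ^ k * norm (real n powr - real K)"
      using eventually_gt_at_top[of 0]
    proof (rule eventually_mono)
      fix n :: nat assume "0 < n"
      then have n: "real n \<ge> 1" by simp
      have "real n ^ (k div 2) / real n ^ k = real n powr (real (k div 2) - real k)"
        using n by (simp add: powr_diff powr_realpow)
      also have "\<dots> \<le> real n powr - real K"
        using n assms(3) by (intro powr_mono) auto
      finally have "C * (real n ^ (k div 2) / real n ^ k) \<le> C * real n powr - real K"
        using C(1) by (rule mult_left_mono)
      moreover have "\<bar>central_moment p k n\<bar> / real n ^ k \<le> C * (real n ^ (k div 2) / real n ^ k)"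
        using divide_right_mono[OF C(2), of "real n ^ k"] by simp
      ultimately have "\<bar>central_moment p k n\<bar> / real n ^ k / p ^ k \<le> C * real n powr - real K / p ^ k"
        using assms(1) by (intro divide_right_mono) auto
      then show "norm (central_moment p k n / (real n * p) ^ k) \<le> C / p ^ k * norm (real n powr - real K)"
        using assms(1) by (simp add: power_mult_distrib abs_divide abs_mult divide_divide_eq_left mult.commute)
    qed
  qed
qed

lemma has_real_derivative_powr_minus_scaled:
  assumes "0 < 1 + x"
  shows "((\<lambda>x. (\<Prod>j<m. - r - real j) * (1 + x) powr (- r - real m)) has_real_derivative
          (\<Prod>j<Suc m. - r - real j) * (1 + x) powr (- r - real (Suc m))) (at x)"
proof -
  have "((\<lambda>x. (1 + x) powr (- r - real m)) has_real_derivative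
      (- r - real m) * (1 + x) powr (- r - real m - of_nat 1) * 1) (at x)"
    by (rule DERIV_fun_powr) (auto intro!: derivative_eq_intros simp: assms)
  from DERIV_cmult[OF this, of "\<Prod>j<m. - r - real j"] show ?thesis
    by (simp add: algebra_simps)
qed

lemma powr_minus_taylor_bound:
  fixes r u :: real
  assumes "0 \<le> r" "0 < N" "- 1 / 2 \<le> u"
  shows "\<bar>(1 + u) powr - r - (\<Sum>k<N. (- r gchoose k) * u ^ k)\<bar>
    \<le> \<bar>- r gchoose N\<bar> * 2 powr (r + real N) * \<bar>u\<bar> ^ N"
proof (cases "u = 0")
  case True
  then show ?thesis using assms(2) by (cases N) (simp_all add: sum.lessThan_Suc_shift)
next
  case False
  define d where "d m x = (\<Prod>j<m. - r - real j) * (1 + x) powr (- r - real m)" for m x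
  have deriv: "(d m has_real_derivative d (Suc m) t) (at t)" if "- 1 / 2 \<le> t" for m t
    unfolding d_def by (rule has_real_derivative_powr_minus_scaled) (use that in simp)
  then have "\<forall>m t. m < N \<and> - 1 / 2 \<le> t \<and> t \<le> max u 0 \<longrightarrow> (d m has_real_derivative d (Suc m) t) (at t)"
    by (intro allI impI deriv) simp
  moreover have "d 0 = (\<lambda>x. (1 + x) powr - r)" by (rule ext) (simp add: d_def)
  ultimately obtain t where t: "if u < 0 then u < t \<and> t < 0 else 0 < t \<and> t < u"
    and "(1 + u) powr - r = (\<Sum>m<N. d m 0 / fact m * (u - 0) ^ m) + d N t / fact N * (u - 0) ^ N"
    using Taylor[of N d _ "- 1 / 2" "max u 0" 0 u] assms False by auto
  then have t_ge: "- 1 / 2 \<le> t"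
    and expansion: "(1 + u) powr - r = (\<Sum>m<N. d m 0 / fact m * u ^ m) + d N t / fact N * u ^ N"
    using assms(3) by (auto split: if_splits)
  have coeff: "d m 0 / fact m = (- r gchoose m)" for m
    using gbinomial_mult_fact[of m "- r"] by (simp add: d_def atLeast0LessThan field_simps)
  have "(1 + t) powr (- r - real N) \<le> (1 / 2) powr (- r - real N)"
    using t_ge assms by (intro powr_mono2') auto
  also have "\<dots> = 1 / 2 powr - (r + real N)"
    by (simp add: powr_divide)
  also have "\<dots> = 2 powr (r + real N)"
    using powr_minus_divide[of 2 "r + real N"] by simp
  moreover have "d N t / fact N = (- r gchoose N) * (1 + t) powr (- r - real N)"
    using coeff[of N] by (simp add: d_def field_simps)
  ultimately have "\<bar>d N t / fact N\<bar> \<le> \<bar>- r gchoose N\<bar> * 2 powr (r + real N)"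
    by (simp add: abs_mult mult_left_mono)
  from mult_right_mono[OF this, of "\<bar>u\<bar> ^ N"] show ?thesis
    unfolding expansion coeff by (simp add: abs_mult power_abs)
qed

lemma binomial_lower_tail_bound:
  assumes "0 < p" "p < 1"
  obtains \<rho> where "0 < \<rho>" "\<rho> < 1"
    "\<And>n. binomial_expectation p n (\<lambda>i. if real i < real n * p / 2 then 1 else 0) \<le> \<rho> ^ n"
proof (rule that[of "2 powr (p / 2) * (1 - p / 2)"])
  show "0 < 2 powr (p / 2) * (1 - p / 2)" using assms by simp
  have "2 powr (p / 2) < exp (p / 2)"
    using assms ln_2_less_1 by (simp add: powr_def)
  then have "2 powr (p / 2) * (1 - p / 2) < exp (p / 2) * (1 - p / 2)"
    using assms by (intro mult_strict_right_mono) auto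
  also have "\<dots> \<le> exp (p / 2) * exp (- (p / 2))"
    using exp_ge_add_one_self[of "- (p / 2)"] by (intro mult_left_mono) auto
  finally show "2 powr (p / 2) * (1 - p / 2) < 1" by (simp add: exp_minus)
next
  fix n
  \<comment> \<open>Exponential Markov inequality: the indicator of \<open>i < n p / 2\<close> is at most \<open>2 powr (n p / 2 - i)\<close>.\<close>
  have "binomial_expectation p n (\<lambda>i. if real i < real n * p / 2 then 1 else 0)
      \<le> binomial_expectation p n (\<lambda>i. 2 powr (real n * p / 2) * (1 / 2) ^ i)"
  proof (rule binomial_expectation_mono)
    fix i
    have "2 powr (real n * p / 2 - real i) = 2 powr (real n * p / 2) * (1 / 2) ^ i"
      unfolding powr_diff by (simp add: powr_realpow power_one_over)
    moreover have "real i < real n * p / 2 \<Longrightarrow> 1 \<le> 2 powr (real n * p / 2 - real i)"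
      by (rule ge_one_powr_ge_zero) auto
    ultimately show "(if real i < real n * p / 2 then 1 else 0) \<le> 2 powr (real n * p / 2) * (1 / 2) ^ i"
      by auto
  qed (use assms in auto)
  also have "\<dots> = 2 powr (real n * p / 2) * (1 - p / 2) ^ n"
    by (simp add: binomial_expectation_cmult binomial_expectation_power)
  also have "2 powr (real n * p / 2) = (2 powr (p / 2)) ^ n"
    by (simp add: powr_realpow[symmetric] powr_powr mult_ac)
  finally show "binomial_expectation p n (\<lambda>i. if real i < real n * p / 2 then 1 else 0)
      \<le> (2 powr (p / 2) * (1 - p / 2)) ^ n"
    by (simp add: power_mult_distrib)
qed

lemma inv_power_taylor_error:
  fixes m r :: real
  assumes "0 < r" "0 < N" "even N" "1 \<le> m"
  shows "\<bar>real i powr - r - m powr - r * (\<Sum>k<N. (- r gchoose k) * ((real i - m) / m) ^ k)\<bar>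
    \<le> m powr - r * \<bar>- r gchoose N\<bar> * 2 powr (r + real N) * ((real i - m) / m) ^ N
      + (if real i < m / 2 then 1 + (\<Sum>k<N. \<bar>- r gchoose k\<bar>) else 0)"
proof -
  define u where "u = (real i - m) / m"
  have m: "0 < m" using assms(4) by simp
  have i: "real i = m * (1 + u)" unfolding u_def using m by (simp add: field_simps)
  have u_pow: "0 \<le> u ^ N" "\<bar>u\<bar> ^ N = u ^ N"
    using assms(3) by (auto simp: zero_le_even_power power_even_abs)
  show ?thesis
  proof (cases "real i < m / 2")
    case False
    then have u: "- 1 / 2 \<le> u" unfolding u_def using m by (simp add: field_simps)
    have "real i powr - r = m powr - r * (1 + u) powr - r"
      unfolding i using m u by (simp add: powr_mult)
    then have "\<bar>real i powr - r - m powr - r * (\<Sum>k<N. (- r gchoose k) * u ^ k)\<bar>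
        = m powr - r * \<bar>(1 + u) powr - r - (\<Sum>k<N. (- r gchoose k) * u ^ k)\<bar>"
      by (simp add: right_diff_distrib[symmetric] abs_mult)
    also have "\<dots> \<le> m powr - r * (\<bar>- r gchoose N\<bar> * 2 powr (r + real N) * \<bar>u\<bar> ^ N)"
      using assms u by (intro mult_left_mono powr_minus_taylor_bound) auto
    finally show ?thesis using False u_pow unfolding u_def[symmetric] by (simp add: mult_ac)
  next
    case True
    then have u: "\<bar>u\<bar> \<le> 1" unfolding u_def using m by (simp add: field_simps abs_le_iff)
    have i_powr: "real i powr - r \<le> 1"
      using powr_mono[of "- r" 0 "real i"] assms(1) by (cases "i = 0") auto
    have m_powr: "m powr - r \<le> 1"
      using powr_mono[of "- r" 0 m] assms by simp
    have "\<bar>(\<Sum>k<N. (- r gchoose k) * u ^ k)\<bar> \<le> (\<Sum>k<N. \<bar>- r gchoose k\<bar>)"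
      using u by (intro order_trans[OF sum_abs] sum_mono)
        (simp add: abs_mult power_abs mult_left_le power_le_one)
    then have "m powr - r * \<bar>(\<Sum>k<N. (- r gchoose k) * u ^ k)\<bar> \<le> 1 * (\<Sum>k<N. \<bar>- r gchoose k\<bar>)"
      using m_powr by (intro mult_mono) auto
    then have "\<bar>real i powr - r - m powr - r * (\<Sum>k<N. (- r gchoose k) * u ^ k)\<bar>
        \<le> 1 + 1 * (\<Sum>k<N. \<bar>- r gchoose k\<bar>)"
      using i_powr by (intro order_trans[OF abs_triangle_ineq4] add_mono) (auto simp: abs_mult)
    moreover have "0 \<le> m powr - r * \<bar>- r gchoose N\<bar> * 2 powr (r + real N) * u ^ N"
      using u_pow by simp
    ultimately show ?thesis using True unfolding u_def[symmetric] by simp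
  qed
qed

lemma binomial_expectation_normalized_power:
  "binomial_expectation p n (\<lambda>i. ((real i - real n * p) / (real n * p)) ^ k)
     = central_moment p k n / (real n * p) ^ k"
  using binomial_expectation_cmult[of p n "1 / (real n * p) ^ k" "\<lambda>i. (real i - real n * p) ^ k"]
  unfolding central_moment_def by (simp add: power_divide)

lemma inv_moment_taylor_error:
  assumes "0 < p" "p < 1" "0 < r" "0 < N" "even N" "1 \<le> real n * p"
    and tail: "binomial_expectation p n (\<lambda>i. if real i < real n * p / 2 then 1 else 0) \<le> \<rho> ^ n"
  shows "\<bar>inv_moment p r n - (real n * p) powr - r *
      (\<Sum>k<N. (- r gchoose k) * central_moment p k n / (real n * p) ^ k)\<bar>
    \<le> (real n * p) powr - r * \<bar>- r gchoose N\<bar> * 2 powr (r + real N) * (central_moment p N n / (real n * p) ^ N)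
      + (1 + (\<Sum>k<N. \<bar>- r gchoose k\<bar>)) * \<rho> ^ n"
proof -
  define m where "m = real n * p"
  define u where "u i = (real i - m) / m" for i
  define B where "B = m powr - r * \<bar>- r gchoose N\<bar> * 2 powr (r + real N)"
  define D where "D = 1 + (\<Sum>k<N. \<bar>- r gchoose k\<bar>)"
  define T where "T i = (\<Sum>k<N. (- r gchoose k) * u i ^ k)" for i
  have "(\<Sum>k<N. (- r gchoose k) * central_moment p k n / m ^ k) = binomial_expectation p n T"
    unfolding T_def binomial_expectation_sum binomial_expectation_cmult u_def m_def
      binomial_expectation_normalized_power by simp
  then have "inv_moment p r n - m powr - r * (\<Sum>k<N. (- r gchoose k) * central_moment p k n / m ^ k)
      = binomial_expectation p n (\<lambda>i. real i powr - r - m powr - r * T i)"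
    by (simp add: inv_moment_eq_binomial_expectation binomial_expectation_diff binomial_expectation_cmult)
  also have "\<bar>\<dots>\<bar> \<le> binomial_expectation p n (\<lambda>i. \<bar>real i powr - r - m powr - r * T i\<bar>)"
    using assms by (intro abs_binomial_expectation_le) auto
  also have "\<dots> \<le> binomial_expectation p n (\<lambda>i. B * u i ^ N + D * (if real i < m / 2 then 1 else 0))"
  proof (rule binomial_expectation_mono)
    fix i
    show "\<bar>real i powr - r - m powr - r * T i\<bar> \<le> B * u i ^ N + D * (if real i < m / 2 then 1 else 0)"
      using inv_power_taylor_error[of r N m i] assms unfolding B_def D_def T_def u_def m_def
      by (cases "real i < real n * p / 2") auto
  qed (use assms in auto)
  also have "\<dots> \<le> B * (central_moment p N n / m ^ N) + D * \<rho> ^ n"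
    unfolding binomial_expectation_add binomial_expectation_cmult u_def m_def
      binomial_expectation_normalized_power
    using tail by (simp add: D_def mult_left_mono sum_nonneg)
  finally show ?thesis unfolding B_def D_def m_def .
qed

lemma inv_moment_taylor_bigo:
  assumes "0 < p" "p < 1" "0 < r" "0 < K"
  shows "(\<lambda>n. inv_moment p r n - (real n * p) powr - r *
      (\<Sum>k<2 * K. (- r gchoose k) * central_moment p k n / (real n * p) ^ k))
    \<in> O(\<lambda>n. (real n * p) powr - r * real n powr - real K)"
    (is "?error \<in> O(?g)")
proof -
  obtain \<rho> where \<rho>: "0 < \<rho>" "\<rho> < 1"
    "\<And>n. binomial_expectation p n (\<lambda>i. if real i < real n * p / 2 then 1 else 0) \<le> \<rho> ^ n"
    using binomial_lower_tail_bound[OF assms(1,2)] by blast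
  define B where "B = \<bar>- r gchoose (2 * K)\<bar> * 2 powr (r + real (2 * K))"
  define D where "D = 1 + (\<Sum>k<2 * K. \<bar>- r gchoose k\<bar>)"
  define G where "G n = (real n * p) powr - r * (B * (central_moment p (2 * K) n / (real n * p) ^ (2 * K)))
    + D * \<rho> ^ n" for n
  have "(\<lambda>n. central_moment p (2 * K) n / (real n * p) ^ (2 * K)) \<in> O(\<lambda>n. real n powr - real K)"
    using assms by (intro central_moment_ratio_bigo) auto
  from landau_o.big.mult[OF bigo_const this, of B]
  have "(\<lambda>n. B * (central_moment p (2 * K) n / (real n * p) ^ (2 * K))) \<in> O(\<lambda>n. real n powr - real K)"
    by simp
  then have moment_part: "(\<lambda>n. (real n * p) powr - r * (B * (central_moment p (2 * K) n / (real n * p) ^ (2 * K))))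
      \<in> O(?g)"
    by (rule landau_o.big.mult_left)
  have "(\<lambda>n. exp (ln \<rho> * real n)) \<in> O(?g)"
    using \<rho> assms(1) by real_asymp
  then have tail_part: "(\<lambda>n. D * \<rho> ^ n) \<in> O(?g)"
    using \<rho> by (simp add: exp_of_nat2_mult)
  have "G \<in> O(?g)"
    unfolding G_def using moment_part tail_part by (rule sum_in_bigo)
  moreover have "?error \<in> O(G)"
  proof (rule bigoI[where c = 1])
    have "eventually (\<lambda>n. 1 \<le> real n * p) sequentially"
      using assms(1) by real_asymp
    then show "\<forall>\<^sub>F n in sequentially. norm (?error n) \<le> 1 * norm (G n)"
    proof (rule eventually_mono)
      fix n assume "1 \<le> real n * p"
      then have "\<bar>?error n\<bar> \<le> G n"
        using inv_moment_taylor_error[OF assms(1-3), of "2 * K" n \<rho>] assms(4) \<rho>(3)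
        unfolding G_def B_def D_def by (simp add: mult_ac)
      then show "norm (?error n) \<le> 1 * norm (G n)" by simp
    qed
  qed
  ultimately show ?thesis using landau_o.big_trans by blast
qed

lemma inverse_power_mult_isCont_bigo:
  assumes "0 < p" "isCont R 0"
  shows "(\<lambda>n. (1 / (real n * p)) ^ K * R (1 / (real n * p))) \<in> O(\<lambda>n. real n powr - real K)"
proof -
  have "(\<lambda>n. 1 / real n * (1 / p)) \<longlonglongrightarrow> 0 * (1 / p)"
    by (intro tendsto_mult lim_1_over_n tendsto_const)
  then have "(\<lambda>n. R (1 / (real n * p))) \<longlonglongrightarrow> R 0"
    by (intro isCont_tendsto_compose[OF assms(2)]) (simp add: mult.commute)
  then have "(\<lambda>n. R (1 / (real n * p))) \<in> O(\<lambda>_. 1)"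
    by (intro bigoI_tendsto[where c = "R 0"]) auto
  from landau_o.big.mult[OF bigo_const this, of "(1 / p) ^ K"]
  have "(\<lambda>n. (1 / p) ^ K * R (1 / (real n * p))) \<in> O(\<lambda>_. 1)" by simp
  from landau_o.big.mult[OF landau_o.big_refl[of "\<lambda>n. real n powr - real K"] this]
  have "(\<lambda>n. real n powr - real K * ((1 / p) ^ K * R (1 / (real n * p)))) \<in> O(\<lambda>n. real n powr - real K)"
    by simp
  moreover have "eventually (\<lambda>n. real n powr - real K * ((1 / p) ^ K * R (1 / (real n * p)))
      = (1 / (real n * p)) ^ K * R (1 / (real n * p))) sequentially"
    using eventually_gt_at_top[of 0]
    by eventually_elim (simp add: powr_minus_divide powr_realpow power_mult_distrib power_divide)
  ultimately show ?thesis by (subst (asm) landau_o.big.in_cong) auto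
qed

lemma moment_series_expansion_bigo:
  fixes E R :: "real \<Rightarrow> real"
  assumes "0 < p" "p < 1" "q = 1 - p" "0 < K" "K \<le> 6"
    and identity: "\<And>x. x \<noteq> 0 \<Longrightarrow>
      (\<Sum>k<2 * K - 1. (- r gchoose k) * central_moment_poly k x q / x ^ k) - E x = (1 / x) ^ K * R (1 / x)"
    and "isCont R 0"
  shows "(\<lambda>n. (\<Sum>k<2 * K. (- r gchoose k) * central_moment p k n / (real n * p) ^ k) - E (real n * p))
    \<in> O(\<lambda>n. real n powr - real K)"
proof -
  let ?c = "\<lambda>k n. (- r gchoose k) * central_moment p k n / (real n * p) ^ k"
  have "eventually (\<lambda>n. (1 / (real n * p)) ^ K * R (1 / (real n * p))
      = (\<Sum>k<2 * K - 1. ?c k n) - E (real n * p)) sequentially"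
    using eventually_gt_at_top[of 0]
  proof eventually_elim
    case (elim n)
    have "(\<Sum>k<2 * K - 1. ?c k n)
        = (\<Sum>k<2 * K - 1. (- r gchoose k) * central_moment_poly k (real n * p) q / (real n * p) ^ k)"
      using assms(3,5) by (intro sum.cong) (auto simp: central_moment_eq_poly)
    then show ?case using identity[of "real n * p"] elim assms(1) by simp
  qed
  with inverse_power_mult_isCont_bigo[OF assms(1,7), of K]
  have "(\<lambda>n. (\<Sum>k<2 * K - 1. ?c k n) - E (real n * p)) \<in> O(\<lambda>n. real n powr - real K)"
    by (subst (asm) landau_o.big.in_cong) auto
  moreover have "(\<lambda>n. ?c (2 * K - 1) n) \<in> O(\<lambda>n. real n powr - real K)"
  proof -
    have "(\<lambda>n. central_moment p (2 * K - 1) n / (real n * p) ^ (2 * K - 1)) \<in> O(\<lambda>n. real n powr - real K)"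
      using assms by (intro central_moment_ratio_bigo) auto
    from landau_o.big.mult[OF bigo_const this, of "- r gchoose (2 * K - 1)"] show ?thesis by simp
  qed
  ultimately have "(\<lambda>n. ((\<Sum>k<2 * K - 1. ?c k n) - E (real n * p)) + ?c (2 * K - 1) n)
      \<in> O(\<lambda>n. real n powr - real K)"
    by (rule sum_in_bigo)
  moreover have "{..<2 * K} = insert (2 * K - 1) {..<2 * K - 1}"
    using assms(4) by auto
  ultimately show ?thesis by (simp add: algebra_simps)
qed

lemma inv_moment_expansion:
  fixes E R :: "real \<Rightarrow> real"
  assumes "0 < p" "p < 1" "q = 1 - p" "0 < r" "0 < K" "K \<le> 6"
    and "\<And>x. x \<noteq> 0 \<Longrightarrow>
      (\<Sum>k<2 * K - 1. (- r gchoose k) * central_moment_poly k x q / x ^ k) - E x = (1 / x) ^ K * R (1 / x)"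
    and "isCont R 0"
  shows "(\<lambda>n. inv_moment p r n - (real n * p) powr - r * E (real n * p))
    \<in> O(\<lambda>n. (real n * p) powr - r * real n powr - real K)"
proof -
  have "(\<lambda>n. (real n * p) powr - r *
      ((\<Sum>k<2 * K. (- r gchoose k) * central_moment p k n / (real n * p) ^ k) - E (real n * p)))
    \<in> O(\<lambda>n. (real n * p) powr - r * real n powr - real K)"
    using moment_series_expansion_bigo[OF assms(1-3,5-8)] by (rule landau_o.big.mult_left)
  from sum_in_bigo(1)[OF inv_moment_taylor_bigo[OF assms(1,2,4,5)] this] show ?thesis
    by (simp add: right_diff_distrib)
qed

lemma inv_moment_asymptotics:
  assumes "0 < p" "p < 1" "q = 1 - p" "0 < r"
  shows "(\<lambda>n. inv_moment p r n - (real n * p) powr - r *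
      (1 + r * (r + 1) * q / (2 * (real n * p))
         + r * (r + 1) * (r + 2) * q * (4 + q + 3 * r * q) / (24 * (real n * p) ^ 2)))
    \<in> O(\<lambda>n. (real n * p) powr - r * real n powr - 3)"
proof -
  define E where "E x = 1 + r * (r + 1) * q / (2 * x)
    + r * (r + 1) * (r + 2) * q * (4 + q + 3 * r * q) / (24 * x ^ 2)" for x
  have "(\<Sum>k<5. (- r gchoose k) * central_moment_poly k x q / x ^ k) - E x
    = (1 / x) ^ 3 * ((- r gchoose 4) * (q - 6 * q ^ 2 + 6 * q ^ 3))" if "x \<noteq> 0" for x
    using that by (simp add: eval_nat_numeral gbinomial_Suc central_moment_poly_def E_def field_simps)
  then have "(\<lambda>n. inv_moment p r n - (real n * p) powr - r * E (real n * p))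
      \<in> O(\<lambda>n. (real n * p) powr - r * real n powr - real 3)"
    using assms by (intro inv_moment_expansion[of p q r 3 E]) auto
  then show ?thesis by (simp add: E_def)
qed

lemma inv_moment_1_asymptotics:
  assumes "0 < p" "p < 1" "q = 1 - p"
  shows "(\<lambda>n. inv_moment p 1 n - (real n * p) powr - 1 *
      (1 + q / (real n * p)
         + q * (1 + q) / (real n * p) ^ 2
         + q * (1 + 4 * q + q ^ 2) / (real n * p) ^ 3
         + q * (1 + q) * (1 + 10 * q + q ^ 2) / (real n * p) ^ 4
         + q * (1 + 26 * q + 66 * q ^ 2 + 26 * q ^ 3 + q ^ 4) / (real n * p) ^ 5))
    \<in> O(\<lambda>n. (real n * p) powr - 1 * real n powr - 6)"
proof -
  define E where "E x =
    1 + q / x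
      + q * (1 + q) / x ^ 2
      + q * (1 + 4 * q + q ^ 2) / x ^ 3
      + q * (1 + q) * (1 + 10 * q + q ^ 2) / x ^ 4
      + q * (1 + 26 * q + 66 * q ^ 2 + 26 * q ^ 3 + q ^ 4) / x ^ 5" for x
  define R where "R w =
    (q + 57 * q^2 + 302 * q^3 + 302 * q^4 - 17268 * q^5 + 24256 * q^6)
    + (q + 120 * q^2 + 1191 * q^3 - 54564 * q^4 + 277236 * q^5 - 461880 * q^6 + 244476 * q^7) * w
    + (q + 247 * q^2 - 18642 * q^3 + 224454 * q^4 - 979056 * q^5 + 1919448 * q^6 - 1729008 * q^7
       + 583056 * q^8) * w^2
    + (q - 510 * q^2 + 18150 * q^3 - 186480 * q^4 + 834120 * q^5 - 1905120 * q^6 + 2328480 * q^7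
       - 1451520 * q^8 + 362880 * q^9) * w^3" for w
  have "(\<Sum>k<11. (- 1 gchoose k) * central_moment_poly k x q / x ^ k) - E x = (1 / x) ^ 6 * R (1 / x)"
    if "x \<noteq> 0" for x
    using that by (simp add: eval_nat_numeral gbinomial_Suc central_moment_poly_def E_def R_def field_simps)
  moreover have "isCont R 0" unfolding R_def by (intro continuous_intros)
  ultimately have "(\<lambda>n. inv_moment p 1 n - (real n * p) powr - 1 * E (real n * p))
      \<in> O(\<lambda>n. (real n * p) powr - 1 * real n powr - real 6)"
    using assms by (intro inv_moment_expansion[of p q 1 6 E R]) auto
  then show ?thesis by (simp add: E_def)
qed

lemma inv_moment_2_asymptotics:
  assumes "0 < p" "p < 1" "q = 1 - p"
  shows "(\<lambda>n. inv_moment p 2 n - (real n * p) powr - 2 *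
      (1 + 3 * q / (real n * p)
         + q * (4 + 7 * q) / (real n * p) ^ 2
         + 5 * q * (1 + 6 * q + 3 * q ^ 2) / (real n * p) ^ 3
         + q * (6 + 91 * q + 146 * q ^ 2 + 31 * q ^ 3) / (real n * p) ^ 4))
    \<in> O(\<lambda>n. (real n * p) powr - 2 * real n powr - 5)"
proof -
  define E where "E x =
    1 + 3 * q / x
      + q * (4 + 7 * q) / x ^ 2
      + 5 * q * (1 + 6 * q + 3 * q ^ 2) / x ^ 3
      + q * (6 + 91 * q + 146 * q ^ 2 + 31 * q ^ 3) / x ^ 4" for x
  define R where "R w =
    (7 * q + 238 * q^2 + 868 * q^3 - 12012 * q^4 + 14868 * q^5)
    + (8 * q + 575 * q^2 - 15084 * q^3 + 72696 * q^4 - 117144 * q^5 + 60012 * q^6) * w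
    + (9 * q - 1134 * q^2 + 16254 * q^3 - 75600 * q^4 + 151200 * q^5 - 136080 * q^6 + 45360 * q^7) * w^2" for w
  have "(\<Sum>k<9. (- 2 gchoose k) * central_moment_poly k x q / x ^ k) - E x = (1 / x) ^ 5 * R (1 / x)"
    if "x \<noteq> 0" for x
    using that by (simp add: eval_nat_numeral gbinomial_Suc central_moment_poly_def E_def R_def field_simps)
  moreover have "isCont R 0" unfolding R_def by (intro continuous_intros)
  ultimately have "(\<lambda>n. inv_moment p 2 n - (real n * p) powr - 2 * E (real n * p))
      \<in> O(\<lambda>n. (real n * p) powr - 2 * real n powr - real 5)"
    using assms by (intro inv_moment_expansion[of p q 2 5 E R]) auto
  then show ?thesis by (simp add: E_def)
qed

lemma inv_moment_3_asymptotics: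
  assumes "0 < p" "p < 1" "q = 1 - p"
  shows "(\<lambda>n. inv_moment p 3 n - (real n * p) powr - 3 *
      (1 + 6 * q / (real n * p)
         + 5 * q * (2 + 5 * q) / (real n * p) ^ 2
         + 15 * q * (1 + 8 * q + 6 * q ^ 2) / (real n * p) ^ 3
         + 7 * q * (3 + 58 * q + 128 * q ^ 2 + 43 * q ^ 3) / (real n * p) ^ 4))
    \<in> O(\<lambda>n. (real n * p) powr - 3 * real n powr - 5)"
proof -
  define E where "E x =
    1 + 6 * q / x
      + 5 * q * (2 + 5 * q) / x ^ 2
      + 15 * q * (1 + 8 * q + 6 * q ^ 2) / x ^ 3
      + 7 * q * (3 + 58 * q + 128 * q ^ 2 + 43 * q ^ 3) / x ^ 4" for x
  define R where "R w =
    (28 * q + 1176 * q^2 + 5586 * q^3 - 63924 * q^4 + 77196 * q^5)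
    + (36 * q + 3123 * q^2 - 77580 * q^3 + 369720 * q^4 - 592920 * q^5 + 302940 * q^6) * w
    + (45 * q - 5670 * q^2 + 81270 * q^3 - 378000 * q^4 + 756000 * q^5 - 680400 * q^6
       + 226800 * q^7) * w^2" for w
  have "(\<Sum>k<9. (- 3 gchoose k) * central_moment_poly k x q / x ^ k) - E x = (1 / x) ^ 5 * R (1 / x)"
    if "x \<noteq> 0" for x
    using that by (simp add: eval_nat_numeral gbinomial_Suc central_moment_poly_def E_def R_def field_simps)
  moreover have "isCont R 0" unfolding R_def by (intro continuous_intros)
  ultimately have "(\<lambda>n. inv_moment p 3 n - (real n * p) powr - 3 * E (real n * p))
      \<in> O(\<lambda>n. (real n * p) powr - 3 * real n powr - real 5)"
    using assms by (intro inv_moment_expansion[of p q 3 5 E R]) auto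
  then show ?thesis by (simp add: E_def)
qed

theorem corollary3:
  fixes p q :: real
  assumes "0 < p" "p < 1" "q = 1 - p"
  shows
   "(\<forall>r::real. r > 0 \<longrightarrow>
      (\<lambda>n. inv_moment p r n
         - (1 / (real n * p) powr r) *
           (1 + r * (r + 1) * q / (2 * (real n * p))
              + r * (r + 1) * (r + 2) * q * (4 + q + 3 * r * q) / (24 * (real n * p) ^ 2)))
      \<in> O[sequentially](\<lambda>n. (1 / (real n * p) powr r) * real n powr (-3)))
    \<and> (\<lambda>n. inv_moment p 1 n
         - (1 / (real n * p)) *
           (1 + q / (real n * p)
              + q * (1 + q) / (real n * p) ^ 2
              + q * (1 + 4 * q + q ^ 2) / (real n * p) ^ 3
              + q * (1 + q) * (1 + 10 * q + q ^ 2) / (real n * p) ^ 4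
              + q * (1 + 26 * q + 66 * q ^ 2 + 26 * q ^ 3 + q ^ 4) / (real n * p) ^ 5))
      \<in> O[sequentially](\<lambda>n. (1 / (real n * p)) * real n powr (-6))
    \<and> (\<lambda>n. inv_moment p 2 n
         - (1 / (real n * p) ^ 2) *
           (1 + 3 * q / (real n * p)
              + q * (4 + 7 * q) / (real n * p) ^ 2
              + 5 * q * (1 + 6 * q + 3 * q ^ 2) / (real n * p) ^ 3
              + q * (6 + 91 * q + 146 * q ^ 2 + 31 * q ^ 3) / (real n * p) ^ 4))
      \<in> O[sequentially](\<lambda>n. (1 / (real n * p) ^ 2) * real n powr (-5))
    \<and> (\<lambda>n. inv_moment p 3 n
         - (1 / (real n * p) ^ 3) *
           (1 + 6 * q / (real n * p)
              + 5 * q * (2 + 5 * q) / (real n * p) ^ 2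
              + 15 * q * (1 + 8 * q + 6 * q ^ 2) / (real n * p) ^ 3
              + 7 * q * (3 + 58 * q + 128 * q ^ 2 + 43 * q ^ 3) / (real n * p) ^ 4))
      \<in> O[sequentially](\<lambda>n. (1 / (real n * p) ^ 3) * real n powr (-5))"
  using inv_moment_asymptotics[OF assms] inv_moment_1_asymptotics[OF assms]
    inv_moment_2_asymptotics[OF assms] inv_moment_3_asymptotics[OF assms] assms(1)
  by (simp add: powr_minus_divide)

end
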